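(* Let $\mu>0$ and $\Sigma=\{0,1,\dots,\mu\}$. The language $\mathcal{L}_{LA}=\{A\in\Sigma^\omega : \text{the limit-average of } A \text{ exists}\}$ is neither $\omega$-regular nor $\omega$-context-free.
   Context: For a sequence $M$, $\mathrm{Sum}(M[0,n-1])=\sum_{j=0}^{n-1}M[j]$. The limit-average of $M$ exists iff $\liminf_{n\to\infty}\frac1n\mathrm{Sum}(M[0,n-1])=\limsup_{n\to\infty}\frac1n\mathrm{Sum}(M[0,n-1])$, and then $\mathrm{LA}(M)$ is this common value. An $\omega$-context-free language is one accepted by a B\"uchi pushdown automaton. *)

theory Defs
  imports Complex_Main "HOL-Library.Extended_Real"
begin

definition omega_words :: "nat set \<Rightarrow> (nat \<Rightarrow> nat) set" where
  "omega_words Sig = {w. \<forall>i. w i \<in> Sig}"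

definition prefix_sum :: "(nat \<Rightarrow> nat) \<Rightarrow> nat \<Rightarrow> real" where
  "prefix_sum M n = (\<Sum>j<n. real (M j))"

definition limit_average_exists :: "(nat \<Rightarrow> nat) \<Rightarrow> bool" where
  "limit_average_exists M \<longleftrightarrow>
     liminf (\<lambda>n. ereal (prefix_sum M n / real n)) = limsup (\<lambda>n. ereal (prefix_sum M n / real n))"

definition L_LA :: "nat \<Rightarrow> (nat \<Rightarrow> nat) set" where
  "L_LA mu = {A \<in> omega_words {0..mu}. limit_average_exists A}"

definition buchi_accepts ::
  "(nat \<times> nat \<times> nat) set \<Rightarrow> nat \<Rightarrow> nat set \<Rightarrow> (nat \<Rightarrow> nat) \<Rightarrow> bool" where
  "buchi_accepts delta q0 F w \<longleftrightarrow>
     (\<exists>r. r 0 = q0 \<and> (\<forall>i. (r i, w i, r (Suc i)) \<in> delta) \<and> (\<exists>\<^sub>\<infinity>i. r i \<in> F))"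

definition omega_regular :: "nat set \<Rightarrow> (nat \<Rightarrow> nat) set \<Rightarrow> bool" where
  "omega_regular Sig L \<longleftrightarrow> L \<subseteq> omega_words Sig \<and>
     (\<exists>Q delta q0 F. finite Q \<and> delta \<subseteq> Q \<times> Sig \<times> Q \<and> q0 \<in> Q \<and> F \<subseteq> Q \<and>
        L = {w \<in> omega_words Sig. buchi_accepts delta q0 F w})"

text \<open>A transition (p, a, Z, p', gamma) in state p with top-of-stack Z reads a
  (None = epsilon move, Some x = reads letter x), replaces Z by the list gamma
  (head = new top) and moves to p'.
  A run on w is an infinite sequence of configurations with input positions pos;
  it is accepting if the whole word is read and accepting states occur infinitely often.\<close>
type_synonym pda_trans = "nat \<times> nat option \<times> nat \<times> nat \<times> nat list"

definition bpda_step :: "pda_trans set \<Rightarrow> (nat \<Rightarrow> nat) \<Rightarrow>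
    (nat \<times> nat list) \<Rightarrow> nat \<Rightarrow> (nat \<times> nat list) \<Rightarrow> nat \<Rightarrow> bool" where
  "bpda_step delta w c k c' k' \<longleftrightarrow>
     (\<exists>p a Z p' gam rest. (p, a, Z, p', gam) \<in> delta \<and>
        c = (p, Z # rest) \<and> c' = (p', gam @ rest) \<and>
        ((a = None \<and> k' = k) \<or> (a = Some (w k) \<and> k' = Suc k)))"

definition bpda_accepts ::
  "pda_trans set \<Rightarrow> nat \<Rightarrow> nat \<Rightarrow> nat set \<Rightarrow> (nat \<Rightarrow> nat) \<Rightarrow> bool" where
  "bpda_accepts delta q0 Z0 F w \<longleftrightarrow>
     (\<exists>c pos. c 0 = (q0, [Z0]) \<and> pos 0 = 0 \<and>
        (\<forall>i. bpda_step delta w (c i) (pos i) (c (Suc i)) (pos (Suc i))) \<and>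
        (\<forall>n. \<exists>i. n \<le> pos i) \<and>
        (\<exists>\<^sub>\<infinity>i. fst (c i) \<in> F))"

definition omega_context_free :: "nat set \<Rightarrow> (nat \<Rightarrow> nat) set \<Rightarrow> bool" where
  "omega_context_free Sig L \<longleftrightarrow> L \<subseteq> omega_words Sig \<and>
     (\<exists>Q Gam delta q0 Z0 F. finite Q \<and> finite Gam \<and> finite delta \<and>
        delta \<subseteq> {(p, a, Z, p', gam). p \<in> Q \<and> (a = None \<or> the a \<in> Sig) \<and> Z \<in> Gam \<and>
                                   p' \<in> Q \<and> set gam \<subseteq> Gam} \<and>
        q0 \<in> Q \<and> Z0 \<in> Gam \<and> F \<subseteq> Q \<and>
        L = {w \<in> omega_words Sig. bpda_accepts delta q0 Z0 F w})"

end

theory Submission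
  imports Defs
begin

text \<open>Every \<open>\<omega>\<close>-regular language is \<open>\<omega>\<close>-context-free (a Buechi automaton is a pushdown
  automaton that never changes its stack), so it suffices to show that \<open>L_LA mu\<close> is not
  \<open>\<omega>\<close>-context-free. In an accepting run of a Buechi pushdown automaton choose infinitely many
  stack-minimal times with the same state and top symbol, consecutive ones separated by an
  accepting state. The run between two consecutive such times never looks below the top symbol,
  so these pieces can be replayed in any order: if \<open>p\<close> lists the input positions at those times,
  every word \<open>w[0, p 0) w[p (\<sigma> 0), p (\<sigma> 0 + 1)) w[p (\<sigma> 1), p (\<sigma> 1 + 1)) \<dots>\<close> is accepted.
  Applied to the Sturmian word of slope \<open>\<surd>2 - 1\<close>, whose limit-average is irrational, the
  factors \<open>w[p j, p (j + 1))\<close> cannot all have the same (rational) average; alternating greedily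
  between a factor of low and one of high average yields an accepted word whose running averages
  oscillate, so it has no limit-average.\<close>

definition concat_blocks :: "(nat \<Rightarrow> nat) \<Rightarrow> (nat \<Rightarrow> nat \<Rightarrow> 'a) \<Rightarrow> nat \<Rightarrow> 'a" where
  "concat_blocks L P t = (SOME x. \<exists>k i. i < L k \<and> t = (\<Sum>m<k. L m) + i \<and> x = P k i)"

lemma block_index_exists:
  fixes L :: "nat \<Rightarrow> nat"
  assumes "\<And>k. 0 < L k"
  shows "\<exists>k i. i < L k \<and> t = (\<Sum>m<k. L m) + i"
proof (induction t)
  case 0
  show ?case using assms by (intro exI[of _ 0]) auto
next
  case (Suc t)
  then obtain k i where ki: "i < L k" "t = (\<Sum>m<k. L m) + i" by blast
  show ?case
  proof (cases "Suc i < L k")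
    case True
    then show ?thesis using ki by (intro exI[of _ k] exI[of _ "Suc i"]) auto
  next
    case False
    then have "Suc i = L k" using ki by auto
    then show ?thesis using ki assms by (intro exI[of _ "Suc k"] exI[of _ 0]) auto
  qed
qed

lemma block_offset_less:
  fixes L :: "nat \<Rightarrow> nat"
  assumes "\<And>k. 0 < L k" "k < k'" "i < L k"
  shows "(\<Sum>m<k. L m) + i < (\<Sum>m<k'. L m)"
proof -
  have "(\<Sum>m<k. L m) + i < (\<Sum>m<Suc k. L m)" using assms(3) by simp
  also have "\<dots> \<le> (\<Sum>m<k'. L m)" by (rule sum_mono2) (use assms(2) in auto)
  finally show ?thesis .
qed

lemma block_index_unique:
  fixes L :: "nat \<Rightarrow> nat"
  assumes "\<And>k. 0 < L k" "i < L k" "i' < L k'" "(\<Sum>m<k. L m) + i = (\<Sum>m<k'. L m) + i'"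
  shows "k = k' \<and> i = i'"
proof -
  have "k = k'"
    using block_offset_less[where L=L, OF assms(1), of k k' i]
      block_offset_less[where L=L, OF assms(1), of k' k i'] assms(2-4)
    by (cases k k' rule: linorder_cases) auto
  then show ?thesis using assms(4) by simp
qed

lemma concat_blocks_eq:
  fixes L :: "nat \<Rightarrow> nat"
  assumes "\<And>k. 0 < L k" "i < L k"
  shows "concat_blocks L P ((\<Sum>m<k. L m) + i) = P k i"
proof -
  have "\<exists>k' i'. i' < L k' \<and> (\<Sum>m<k. L m) + i = (\<Sum>m<k'. L m) + i'
      \<and> concat_blocks L P ((\<Sum>m<k. L m) + i) = P k' i'"
    unfolding concat_blocks_def by (rule someI_ex) (use assms(2) in blast)
  then show ?thesis using block_index_unique[where L=L, OF assms(1,2)] by metis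
qed

lemma concat_blocks_eq_end:
  fixes L :: "nat \<Rightarrow> nat"
  assumes "\<And>k. 0 < L k" "\<And>k. P k (L k) = P (Suc k) 0"
  shows "concat_blocks L P ((\<Sum>m<k. L m) + L k) = P k (L k)"
  using concat_blocks_eq[where L=L, OF assms(1), of 0 "Suc k" P] assms by simp

lemma concat_blocks_chain:
  fixes L :: "nat \<Rightarrow> nat"
  assumes pos: "\<And>k. 0 < L k"
    and step: "\<And>k i. i < L k \<Longrightarrow> R (P k i) (P k (Suc i))"
    and glue: "\<And>k. P k (L k) = P (Suc k) 0"
  shows "R (concat_blocks L P t) (concat_blocks L P (Suc t))"
proof -
  obtain k i where ki: "i < L k" "t = (\<Sum>m<k. L m) + i" using block_index_exists[where L=L, OF pos] by blast
  have "concat_blocks L P (Suc t) = P k (Suc i)"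
  proof (cases "Suc i < L k")
    case True
    then show ?thesis using concat_blocks_eq[where L=L, OF pos True] ki by simp
  next
    case False
    then have "Suc i = L k" using ki by simp
    then show ?thesis using concat_blocks_eq_end[where L=L, OF pos glue, of k] ki
      by (metis add_Suc_right)
  qed
  then show ?thesis using step[OF ki(1)] concat_blocks_eq[where L=L and P=P, OF pos ki(1)] ki(2) by simp
qed

lemma lessThan_le_sum_pos:
  fixes L :: "nat \<Rightarrow> nat"
  assumes "\<And>k. 0 < L k"
  shows "n \<le> (\<Sum>m<n. L m)"
  using sum_mono[of "{..<n}" "\<lambda>_. 1::nat" L] assms by (simp add: Suc_le_eq)

section \<open>Pumped words\<close>

definition block_start :: "(nat \<Rightarrow> nat) \<Rightarrow> (nat \<Rightarrow> nat) \<Rightarrow> nat \<Rightarrow> nat" where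
  "block_start p \<sigma> k = (case k of 0 \<Rightarrow> 0 | Suc m \<Rightarrow> p (\<sigma> m))"

definition block_end :: "(nat \<Rightarrow> nat) \<Rightarrow> (nat \<Rightarrow> nat) \<Rightarrow> nat \<Rightarrow> nat" where
  "block_end p \<sigma> k = (case k of 0 \<Rightarrow> p 0 | Suc m \<Rightarrow> p (Suc (\<sigma> m)))"

text \<open>\<open>pump w p \<sigma>\<close> is the word \<open>w[0, p 0)\<close> followed by the factors
  \<open>w[p (\<sigma> m), p (\<sigma> m + 1))\<close> for \<open>m = 0, 1, \<dots>\<close>\<close>
definition pump :: "(nat \<Rightarrow> 'a) \<Rightarrow> (nat \<Rightarrow> nat) \<Rightarrow> (nat \<Rightarrow> nat) \<Rightarrow> nat \<Rightarrow> 'a" where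
  "pump w p \<sigma> = concat_blocks (\<lambda>k. block_end p \<sigma> k - block_start p \<sigma> k) (\<lambda>k i. w (block_start p \<sigma> k + i))"

lemma block_start_simps [simp]:
  "block_start p \<sigma> 0 = 0" "block_start p \<sigma> (Suc k) = p (\<sigma> k)"
  by (simp_all add: block_start_def)

lemma block_end_simps [simp]:
  "block_end p \<sigma> 0 = p 0" "block_end p \<sigma> (Suc k) = p (Suc (\<sigma> k))"
  by (simp_all add: block_end_def)

lemma block_start_less_end:
  assumes "strict_mono p" "0 < p 0"
  shows "block_start p \<sigma> k < block_end p \<sigma> k"
  using assms by (cases k) (simp_all add: strict_mono_Suc_iff)

lemma pump_eq:
  assumes "strict_mono p" "0 < p 0" "i < block_end p \<sigma> k - block_start p \<sigma> k"
  shows "pump w p \<sigma> ((\<Sum>m<k. block_end p \<sigma> m - block_start p \<sigma> m) + i) = w (block_start p \<sigma> k + i)"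
  unfolding pump_def using block_start_less_end[OF assms(1,2)] assms(3)
  by (intro concat_blocks_eq) simp_all

lemma pump_in_omega_words:
  assumes "strict_mono p" "0 < p 0" "w \<in> omega_words Sig"
  shows "pump w p \<sigma> \<in> omega_words Sig"
  unfolding omega_words_def
proof (intro CollectI allI)
  fix n
  have "\<And>k. 0 < block_end p \<sigma> k - block_start p \<sigma> k"
    using block_start_less_end[OF assms(1,2)] by simp
  from block_index_exists[where L="\<lambda>k. block_end p \<sigma> k - block_start p \<sigma> k", OF this]
  obtain k i where "i < block_end p \<sigma> k - block_start p \<sigma> k"
    "n = (\<Sum>m<k. block_end p \<sigma> m - block_start p \<sigma> m) + i"
    by blast
  then show "pump w p \<sigma> n \<in> Sig"
    using pump_eq[OF assms(1,2), of i \<sigma> k w] assms(3) by (simp add: omega_words_def)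
qed

section \<open>Pumping Buechi pushdown automata\<close>

lemma bpda_step_replace_bottom:
  assumes st: "bpda_step delta w (q, t @ R) k (q', t' @ R) k'"
    and "t \<noteq> []"
    and letter: "k' = Suc k \<Longrightarrow> v m = w k"
  shows "bpda_step delta v (q, t @ B) m (q', t' @ B) (m + (k' - k))"
proof -
  obtain a Z gam rest where tr: "(q, a, Z, q', gam) \<in> delta"
    and top: "t @ R = Z # rest" and new: "t' @ R = gam @ rest"
    and lab: "(a = None \<and> k' = k) \<or> (a = Some (w k) \<and> k' = Suc k)"
    using st unfolding bpda_step_def by auto
  from \<open>t \<noteq> []\<close> top have t: "t = Z # tl t" and "rest = tl t @ R" by (cases t; auto)+
  with new have "t' @ B = gam @ (tl t @ B)" by simp
  moreover have "t @ B = Z # (tl t @ B)" using t by (metis append_Cons)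
  ultimately show ?thesis using tr lab letter unfolding bpda_step_def by fastforce
qed

locale bpda_run =
  fixes delta :: "pda_trans set" and w :: "nat \<Rightarrow> nat"
    and c :: "nat \<Rightarrow> nat \<times> nat list" and pos :: "nat \<Rightarrow> nat"
  assumes run_step: "bpda_step delta w (c i) (pos i) (c (Suc i)) (pos (Suc i))"
begin

abbreviation state :: "nat \<Rightarrow> nat" where "state i \<equiv> fst (c i)"
abbreviation stack :: "nat \<Rightarrow> nat list" where "stack i \<equiv> snd (c i)"

lemma stack_nonempty: "stack i \<noteq> []"
  using run_step[of i] unfolding bpda_step_def by auto

lemma pos_le_Suc: "pos i \<le> pos (Suc i)"
  using run_step[of i] unfolding bpda_step_def by auto

lemma pos_mono: "i \<le> j \<Longrightarrow> pos i \<le> pos j"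
  using pos_le_Suc by (metis lift_Suc_mono_le)

definition stack_minimal :: "nat \<Rightarrow> bool" where
  "stack_minimal i \<longleftrightarrow> (\<forall>j\<ge>i. length (stack i) \<le> length (stack j))"

lemma stack_minimal_singleton: "length (stack i) = 1 \<Longrightarrow> stack_minimal i"
  using stack_nonempty unfolding stack_minimal_def by (simp add: Suc_le_eq)

lemma stack_minimal_unbounded: "\<exists>i\<ge>n. stack_minimal i"
proof -
  obtain i where "n \<le> i" "\<forall>j. n \<le> j \<longrightarrow> length (stack i) \<le> length (stack j)"
    using ex_has_least_nat[of "\<lambda>j. n \<le> j" n "\<lambda>j. length (stack j)"] by auto
  then show ?thesis unfolding stack_minimal_def by auto
qed

text \<open>The part of the stack at time \<open>j\<close> that was pushed on top of the bottom
  \<open>tl (stack i)\<close> of the stack at time \<open>i\<close>.\<close>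
definition above :: "nat \<Rightarrow> nat \<Rightarrow> nat list" where
  "above i j = take (length (stack j) - length (tl (stack i))) (stack j)"

lemma stack_above_minimal:
  assumes "stack_minimal i" "i \<le> j"
  shows "stack j = above i j @ tl (stack i) \<and> above i j \<noteq> []"
proof -
  have "\<exists>t. stack j = t @ tl (stack i) \<and> t \<noteq> []"
    using \<open>i \<le> j\<close>
  proof (induction j rule: dec_induct)
    case base
    show ?case using stack_nonempty[of i] by (intro exI[of _ "[hd (stack i)]"]) simp
  next
    case (step n)
    then obtain t where t: "stack n = t @ tl (stack i)" "t \<noteq> []" by blast
    obtain a Z gam rest where "stack n = Z # rest" "stack (Suc n) = gam @ rest"
      using run_step[of n] unfolding bpda_step_def by auto
    moreover have "t = hd t # tl t" using t(2) by simp
    ultimately have new: "stack (Suc n) = (gam @ tl t) @ tl (stack i)"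
      using t(1) by (metis append.assoc append_Cons list.inject)
    have "length (stack i) \<le> length (stack (Suc n))"
      using assms(1) step(1) unfolding stack_minimal_def by simp
    moreover have "length (stack i) = Suc (length (tl (stack i)))"
      using stack_nonempty[of i] by simp
    ultimately have "gam @ tl t \<noteq> []" using new by (metis append_Nil le_imp_less_Suc less_irrefl)
    with new show ?case by (intro exI[of _ "gam @ tl t"]) simp
  qed
  then show ?thesis unfolding above_def by auto
qed

text \<open>A step above a stack-minimal time never touches the bottom, so it can be replayed
  over any other bottom \<open>B\<close> and against any word that has the same letter at the read position.\<close>
lemma replay_step_above_minimal:
  assumes "stack_minimal i" "i \<le> j"
    and letter: "pos (Suc j) = Suc (pos j) \<Longrightarrow> v (m + (pos j - pos i)) = w (pos j)"
  shows "bpda_step delta v (state j, above i j @ B) (m + (pos j - pos i))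
           (state (Suc j), above i (Suc j) @ B) (m + (pos (Suc j) - pos i))"
proof -
  have j: "stack j = above i j @ tl (stack i)" "above i j \<noteq> []"
    and Sj: "stack (Suc j) = above i (Suc j) @ tl (stack i)"
    using stack_above_minimal[OF assms(1), of j] stack_above_minimal[OF assms(1), of "Suc j"] \<open>i \<le> j\<close>
    by simp_all
  have "bpda_step delta w (state j, above i j @ tl (stack i)) (pos j)
          (state (Suc j), above i (Suc j) @ tl (stack i)) (pos (Suc j))"
    unfolding j(1)[symmetric] Sj[symmetric] prod.collapse by (rule run_step)
  from bpda_step_replace_bottom[where v=v and m="m + (pos j - pos i)" and B=B, OF this j(2) letter]
  have "bpda_step delta v (state j, above i j @ B) (m + (pos j - pos i))
          (state (Suc j), above i (Suc j) @ B) (m + (pos j - pos i) + (pos (Suc j) - pos j))" .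
  moreover have "m + (pos j - pos i) + (pos (Suc j) - pos j) = m + (pos (Suc j) - pos i)"
    using pos_mono[OF \<open>i \<le> j\<close>] pos_le_Suc[of j] by linarith
  ultimately show ?thesis by simp
qed

definition mode :: "nat \<Rightarrow> nat \<times> nat" where
  "mode i = (state i, hd (stack i))"

lemma finite_modes:
  assumes "finite delta"
  shows "finite (range mode)"
proof -
  define states where "states = insert (state 0) ((\<lambda>(p, a, Z, p', gam). p') ` delta)"
  define symbols where "symbols = set (stack 0) \<union> \<Union>((\<lambda>(p, a, Z, p', gam). set gam) ` delta)"
  have "state i \<in> states \<and> set (stack i) \<subseteq> symbols" for i
  proof (induction i)
    case 0
    then show ?case by (simp add: states_def symbols_def)
  next
    case (Suc i)
    obtain p a Z p' gam rest where tr: "(p, a, Z, p', gam) \<in> delta"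
      and "stack i = Z # rest" "c (Suc i) = (p', gam @ rest)"
      using run_step[of i] unfolding bpda_step_def by auto
    moreover have "p' \<in> states" "set gam \<subseteq> symbols"
      using tr unfolding states_def symbols_def by force+
    ultimately show ?case using Suc by auto
  qed
  then have "range mode \<subseteq> states \<times> symbols"
    using stack_nonempty unfolding mode_def by (auto intro: hd_in_set)
  moreover have "finite (states \<times> symbols)"
    using assms unfolding states_def symbols_def by auto
  ultimately show ?thesis by (rule finite_subset)
qed

lemma cut_points:
  assumes "finite delta" and acc: "\<exists>\<^sub>\<infinity>i. state i \<in> F" and unb: "\<forall>n. \<exists>i. n \<le> pos i"
  shows "\<exists>g. pos 0 < pos (g 0) \<and> (\<forall>k. stack_minimal (g k) \<and> mode (g k) = mode (g 0)) \<and>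
    (\<forall>k. g k < g (Suc k) \<and> pos (g k) < pos (g (Suc k)) \<and> (\<exists>j. g k \<le> j \<and> j < g (Suc k) \<and> state j \<in> F))"
proof -
  have "infinite (Collect stack_minimal)"
    using stack_minimal_unbounded unfolding infinite_nat_iff_unbounded_le by auto
  moreover have "finite (mode ` Collect stack_minimal)"
    using finite_modes[OF assms(1)] by (rule finite_subset[rotated]) auto
  ultimately obtain i0 where "infinite {i \<in> Collect stack_minimal. mode i = mode i0}"
    using pigeonhole_infinite by blast
  moreover define S where "S = {i. stack_minimal i \<and> mode i = mode i0}"
  ultimately have S: "infinite S" by simp
  have next_cut: "\<exists>i'\<in>S. i < i' \<and> pos i < pos i' \<and> (\<exists>j. i \<le> j \<and> j < i' \<and> state j \<in> F)" for i
  proof -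
    obtain j where j: "i \<le> j" "state j \<in> F" using acc unfolding INFM_nat_le by blast
    obtain j' where j': "Suc (pos i) \<le> pos j'" using unb by blast
    obtain i' where i': "i' \<in> S" "Suc (max j (max j' i)) \<le> i'"
      using S unfolding S_def infinite_nat_iff_unbounded_le by blast
    have "pos j' \<le> pos i'" using i' by (intro pos_mono) auto
    then show ?thesis using i' j j' by (intro bexI[of _ i']) auto
  qed
  obtain g where g: "\<forall>k. (g k \<in> S \<and> pos 0 < pos (g k)) \<and> g k < g (Suc k) \<and>
      pos (g k) < pos (g (Suc k)) \<and> (\<exists>j. g k \<le> j \<and> j < g (Suc k) \<and> state j \<in> F)"
  proof (atomize_elim, rule dependent_nat_choice)
    show "\<exists>x. x \<in> S \<and> pos 0 < pos x" using next_cut[of 0] by blast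
    show "\<exists>y. (y \<in> S \<and> pos 0 < pos y) \<and> x < y \<and> pos x < pos y \<and>
        (\<exists>j. x \<le> j \<and> j < y \<and> state j \<in> F)" if "x \<in> S \<and> pos 0 < pos x" for x and n :: nat
      using next_cut[of x] that by force
  qed
  have "stack_minimal (g k) \<and> mode (g k) = mode (g 0)" for k
    using g unfolding S_def by simp
  with g show ?thesis by (intro exI[of _ g] conjI allI) simp_all
qed

end

locale bpda_splice = bpda_run +
  fixes q0 Z0 F and g \<sigma> :: "nat \<Rightarrow> nat"
  assumes init: "c 0 = (q0, [Z0])" "pos 0 = 0"
    and first_cut: "0 < pos (g 0)"
    and cut_minimal: "stack_minimal (g k)"
    and cut_mode: "mode (g k) = mode (g 0)"
    and cut_less: "g k < g (Suc k)" "pos (g k) < pos (g (Suc k))"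
    and cut_accepting: "\<exists>j. g k \<le> j \<and> j < g (Suc k) \<and> state j \<in> F"
begin

abbreviation start :: "nat \<Rightarrow> nat" where "start \<equiv> block_start g \<sigma>"
abbreviation finish :: "nat \<Rightarrow> nat" where "finish \<equiv> block_end g \<sigma>"

lemma start_minimal: "stack_minimal (start k)"
  using cut_minimal stack_minimal_singleton[of 0] init by (cases k) simp_all

lemma start_less_finish: "start k < finish k"
  using cut_less(1) first_cut init by (cases k) (auto intro: gr0I)

lemma pos_start_less_finish: "pos (start k) < pos (finish k)"
  using cut_less(2) first_cut init by (cases k) simp_all

primrec bottom :: "nat \<Rightarrow> nat list" where
  "bottom 0 = []"
| "bottom (Suc k) = tl (above (start k) (finish k)) @ bottom k"

definition offset :: "nat \<Rightarrow> nat" where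
  "offset k = (\<Sum>m<k. pos (finish m) - pos (start m))"

text \<open>The \<open>i\<close>-th configuration of the spliced run within its \<open>k\<close>-th piece, which replays
  the original run from \<open>start k\<close> to \<open>finish k\<close> over the bottom \<open>bottom k\<close>.\<close>
definition conf :: "nat \<Rightarrow> nat \<Rightarrow> (nat \<times> nat list) \<times> nat" where
  "conf k i = ((state (start k + i), above (start k) (start k + i) @ bottom k),
                offset k + (pos (start k + i) - pos (start k)))"

lemma conf_glue: "conf k (finish k - start k) = conf (Suc k) 0"
proof -
  let ?s = "start (Suc k)"
  have "mode (finish k) = mode (g 0)"
    using cut_mode[of "Suc (\<sigma> (k - 1))"] by (cases k) simp_all
  moreover have "mode ?s = mode (g 0)" using cut_mode[of "\<sigma> k"] by simp
  ultimately have same_state: "state (finish k) = state ?s"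
    and same_top: "hd (stack (finish k)) = hd (stack ?s)" by (simp_all add: mode_def)
  have "stack ?s = above ?s ?s @ tl (stack ?s)" "above ?s ?s \<noteq> []"
    using stack_above_minimal[OF start_minimal, of "Suc k" ?s] by simp_all
  then have "above ?s ?s = [hd (stack ?s)]"
    by (metis append_eq_Cons_conv append_self_conv2 list.collapse list.sel(3) stack_nonempty)
  moreover have "stack (finish k) = above (start k) (finish k) @ tl (stack (start k))"
    "above (start k) (finish k) \<noteq> []"
    using stack_above_minimal[OF start_minimal, of k "finish k"] start_less_finish[of k] by simp_all
  ultimately have "above (start k) (finish k) @ bottom k = above ?s ?s @ bottom (Suc k)"
    using same_top by (cases "above (start k) (finish k)") simp_all
  moreover have "offset k + (pos (finish k) - pos (start k)) = offset (Suc k)"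
    by (simp add: offset_def)
  ultimately show ?thesis
    using same_state start_less_finish[of k] by (simp add: conf_def)
qed

abbreviation pumped :: "nat \<Rightarrow> nat" where "pumped \<equiv> pump w (pos \<circ> g) \<sigma>"

lemma pumped_eq:
  assumes "i < pos (finish k) - pos (start k)"
  shows "pumped (offset k + i) = w (pos (start k) + i)"
proof -
  have bs: "block_start (pos \<circ> g) \<sigma> k = pos (start k)" "block_end (pos \<circ> g) \<sigma> k = pos (finish k)" for k
    using init by (cases k; simp)+
  have "strict_mono (pos \<circ> g)" "0 < (pos \<circ> g) 0"
    using cut_less first_cut by (simp_all add: strict_mono_Suc_iff)
  from pump_eq[OF this, of i \<sigma> k w] show ?thesis using assms by (simp only: bs offset_def)
qed

lemma conf_step:
  assumes "i < finish k - start k"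
  shows "bpda_step delta pumped (fst (conf k i)) (snd (conf k i)) (fst (conf k (Suc i))) (snd (conf k (Suc i)))"
proof -
  let ?j = "start k + i"
  have letter: "pumped (offset k + (pos ?j - pos (start k))) = w (pos ?j)"
    if "pos (Suc ?j) = Suc (pos ?j)"
  proof -
    have "pos (start k) \<le> pos ?j" "pos (Suc ?j) \<le> pos (finish k)"
      using assms by (simp_all add: pos_mono)
    then have "pos ?j - pos (start k) < pos (finish k) - pos (start k)" using that by linarith
    from pumped_eq[OF this] show ?thesis using \<open>pos (start k) \<le> pos ?j\<close> by simp
  qed
  from replay_step_above_minimal[where v=pumped and m="offset k" and B="bottom k",
      OF start_minimal le_add1 letter]
  show ?thesis unfolding conf_def fst_conv snd_conv add_Suc_right .
qed

lemma pumped_accepted: "bpda_accepts delta q0 Z0 F pumped"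
proof -
  define run where "run = concat_blocks (\<lambda>k. finish k - start k) conf"
  have len_pos: "\<And>k. 0 < finish k - start k" using start_less_finish by simp
  have run_at: "run ((\<Sum>m<k. finish m - start m) + i) = conf k i" if "i < finish k - start k" for k i
    unfolding run_def by (rule concat_blocks_eq[where L="\<lambda>k. finish k - start k", OF len_pos that])
  show ?thesis
    unfolding bpda_accepts_def
  proof (intro exI[of _ "fst \<circ> run"] exI[of _ "snd \<circ> run"] conjI allI)
    have "above 0 0 = [Z0]" using init by (simp add: above_def)
    then show "(fst \<circ> run) 0 = (q0, [Z0])" "(snd \<circ> run) 0 = 0"
      using run_at[of 0 0] len_pos[of 0] init by (simp_all add: conf_def offset_def)
    show "bpda_step delta pumped ((fst \<circ> run) t) ((snd \<circ> run) t) ((fst \<circ> run) (Suc t)) ((snd \<circ> run) (Suc t))" for t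
      using concat_blocks_chain[where L="\<lambda>k. finish k - start k" and P=conf
          and R="\<lambda>x y. bpda_step delta pumped (fst x) (snd x) (fst y) (snd y)", OF len_pos conf_step conf_glue]
      by (simp add: run_def)
    show "\<exists>t. n \<le> (snd \<circ> run) t" for n
    proof -
      have "n \<le> offset n"
        unfolding offset_def using pos_start_less_finish by (intro lessThan_le_sum_pos) simp
      then show ?thesis using run_at[of 0 n] len_pos[of n] by (intro exI[of _ "\<Sum>m<n. finish m - start m"]) (simp add: conf_def)
    qed
    show "\<exists>\<^sub>\<infinity>t. fst ((fst \<circ> run) t) \<in> F"
      unfolding INFM_nat
    proof
      fix M
      obtain j where j: "start (Suc M) \<le> j" "j < finish (Suc M)" "state j \<in> F"
        using cut_accepting[of "\<sigma> M"] by auto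
      define t where "t = (\<Sum>m<Suc M. finish m - start m) + (j - start (Suc M))"
      have "Suc M \<le> (\<Sum>m<Suc M. finish m - start m)" using len_pos by (rule lessThan_le_sum_pos)
      then have "M < t" by (simp add: t_def)
      moreover have "fst ((fst \<circ> run) t) = state j"
        using run_at[of "j - start (Suc M)" "Suc M"] j by (simp add: t_def conf_def)
      ultimately show "\<exists>t>M. fst ((fst \<circ> run) t) \<in> F" using j(3) by (intro exI[of _ t]) simp
    qed
  qed
qed

end

lemma bpda_pumping:
  assumes "finite delta" and "bpda_accepts delta q0 Z0 F w"
  shows "\<exists>p. strict_mono p \<and> 0 < p 0 \<and> (\<forall>\<sigma>. bpda_accepts delta q0 Z0 F (pump w p \<sigma>))"
proof -
  obtain c pos where init: "c 0 = (q0, [Z0])" "pos 0 = 0"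
    and steps: "\<And>i. bpda_step delta w (c i) (pos i) (c (Suc i)) (pos (Suc i))"
    and unb: "\<forall>n. \<exists>i. n \<le> pos i" and acc: "\<exists>\<^sub>\<infinity>i. fst (c i) \<in> F"
    using assms(2) unfolding bpda_accepts_def by blast
  interpret bpda_run delta w c pos by (rule bpda_run.intro) (rule steps)
  obtain g where g: "pos 0 < pos (g 0)" "\<And>k. stack_minimal (g k) \<and> mode (g k) = mode (g 0)"
    "\<And>k. g k < g (Suc k) \<and> pos (g k) < pos (g (Suc k)) \<and> (\<exists>j. g k \<le> j \<and> j < g (Suc k) \<and> state j \<in> F)"
    using cut_points[OF assms(1) acc unb] by blast
  have "bpda_accepts delta q0 Z0 F (pump w (pos \<circ> g) \<sigma>)" for \<sigma>
  proof (rule bpda_splice.pumped_accepted, unfold_locales)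
    show "stack_minimal (g k)" "mode (g k) = mode (g 0)" for k using g(2)[of k] by simp_all
  qed (use g(1,3) init in simp_all)
  moreover have "strict_mono (pos \<circ> g)" using g(3) by (simp add: strict_mono_Suc_iff)
  ultimately show ?thesis using g(1) init by (intro exI[of _ "pos \<circ> g"]) auto
qed


section \<open>Averages of pumped words\<close>

lemma prefix_sum_add: "prefix_sum w (a + b) = prefix_sum w a + (\<Sum>i<b. real (w (a + i)))"
  by (induction b) (simp_all add: prefix_sum_def)

lemma prefix_sum_pump:
  assumes "strict_mono p" "0 < p 0"
  shows "prefix_sum (pump w p \<sigma>) (\<Sum>m<k. block_end p \<sigma> m - block_start p \<sigma> m)
     = (\<Sum>m<k. prefix_sum w (block_end p \<sigma> m) - prefix_sum w (block_start p \<sigma> m))"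
proof (induction k)
  case 0
  then show ?case by (simp add: prefix_sum_def)
next
  case (Suc k)
  let ?T = "\<Sum>m<k. block_end p \<sigma> m - block_start p \<sigma> m"
  let ?s = "block_start p \<sigma> k" and ?l = "block_end p \<sigma> k - block_start p \<sigma> k"
  have "prefix_sum (pump w p \<sigma>) (?T + ?l) = prefix_sum (pump w p \<sigma>) ?T + (\<Sum>i<?l. real (pump w p \<sigma> (?T + i)))"
    by (rule prefix_sum_add)
  also have "(\<Sum>i<?l. real (pump w p \<sigma> (?T + i))) = (\<Sum>i<?l. real (w (?s + i)))"
    using pump_eq[OF assms] by (intro sum.cong) auto
  also have "\<dots> = prefix_sum w (?s + ?l) - prefix_sum w ?s"
    using prefix_sum_add[of w ?s ?l] by simp
  also have "?s + ?l = block_end p \<sigma> k"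
    using block_start_less_end[OF assms, of \<sigma> k] by simp
  finally show ?case using Suc by simp
qed

definition factor_sum :: "(nat \<Rightarrow> nat) \<Rightarrow> (nat \<Rightarrow> nat) \<Rightarrow> nat \<Rightarrow> real" where
  "factor_sum w p j = prefix_sum w (p (Suc j)) - prefix_sum w (p j)"

definition factor_len :: "(nat \<Rightarrow> nat) \<Rightarrow> nat \<Rightarrow> real" where
  "factor_len p j = real (p (Suc j)) - real (p j)"

lemma factor_len_pos: "strict_mono p \<Longrightarrow> 0 < factor_len p j"
  by (simp add: factor_len_def strict_mono_Suc_iff)

lemma average_pump_at_block_end:
  fixes \<sigma> :: "nat \<Rightarrow> nat" and n :: nat
  assumes "strict_mono p" "0 < p 0"
  defines "T \<equiv> \<Sum>m<Suc n. block_end p \<sigma> m - block_start p \<sigma> m"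
  shows "prefix_sum (pump w p \<sigma>) T / real T
       = (prefix_sum w (p 0) + (\<Sum>m<n. factor_sum w p (\<sigma> m))) / (real (p 0) + (\<Sum>m<n. factor_len p (\<sigma> m)))"
proof -
  have "prefix_sum (pump w p \<sigma>) T = prefix_sum w (p 0) + (\<Sum>m<n. factor_sum w p (\<sigma> m))"
    unfolding T_def prefix_sum_pump[OF assms(1,2)] unfolding sum.lessThan_Suc_shift
    by (simp add: factor_sum_def prefix_sum_def)
  moreover have "real T = real (p 0) + (\<Sum>m<n. factor_len p (\<sigma> m))"
    using block_start_less_end[OF assms(1,2), of \<sigma> "Suc _"]
    unfolding T_def sum.lessThan_Suc_shift by (simp add: factor_len_def of_nat_diff less_imp_le)
  ultimately show ?thesis by simp
qed

lemma prefix_sum_rat: "prefix_sum w n \<in> \<rat>"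
  unfolding prefix_sum_def by (rule Rats_sum) auto

text \<open>If all factors had the same average \<open>c\<close>, the averages along \<open>p\<close> would tend to the
  rational number \<open>c\<close>.\<close>
lemma factor_averages_not_constant:
  assumes lim: "(\<lambda>n. prefix_sum w n / real n) \<longlonglongrightarrow> \<alpha>" and "\<alpha> \<notin> \<rat>"
    and p: "strict_mono p" "0 < p 0"
  shows "\<exists>j. factor_sum w p j / factor_len p j \<noteq> factor_sum w p 0 / factor_len p 0"
proof (rule ccontr)
  assume const_avg: "\<not> ?thesis"
  define c where "c = factor_sum w p 0 / factor_len p 0"
  have factor: "factor_sum w p j = c * factor_len p j" for j
  proof -
    have "factor_sum w p j / factor_len p j = c" using const_avg by (simp add: c_def)
    then show ?thesis using factor_len_pos[OF p(1), of j] by (simp add: field_simps)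
  qed
  define P0 where "P0 = prefix_sum w (p 0)"
  have prefix: "prefix_sum w (p k) = P0 + c * (real (p k) - real (p 0))" for k
  proof (induction k)
    case (Suc k)
    then show ?case using factor[of k] by (simp add: factor_sum_def factor_len_def algebra_simps)
  qed (simp add: P0_def)
  have p_at_top: "filterlim (\<lambda>k. real (p k)) at_top sequentially"
    using filterlim_compose[OF filterlim_real_sequentially filterlim_subseq[OF p(1)]] by (simp add: o_def)
  have "(\<lambda>k. c + (P0 - c * real (p 0)) / real (p k)) \<longlonglongrightarrow> c + 0"
    by (intro tendsto_add tendsto_const tendsto_divide_0[OF tendsto_const]
        filterlim_at_top_imp_at_infinity[OF p_at_top])
  moreover have "c + (P0 - c * real (p 0)) / real (p k) = prefix_sum w (p k) / real (p k)" for k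
  proof -
    have "0 < p k" using p by (metis le0 less_le_trans strict_mono_less_eq)
    then show ?thesis by (simp add: prefix field_simps)
  qed
  moreover have "(\<lambda>k. prefix_sum w (p k) / real (p k)) \<longlonglongrightarrow> \<alpha>"
    using LIMSEQ_subseq_LIMSEQ[OF lim p(1)] by (simp add: o_def)
  ultimately have "\<alpha> = c" using LIMSEQ_unique by fastforce
  moreover have "c \<in> \<rat>"
    unfolding c_def factor_sum_def factor_len_def by (intro Rats_divide Rats_diff prefix_sum_rat Rats_of_nat)
  ultimately show False using \<open>\<alpha> \<notin> \<rat>\<close> by simp
qed

lemma mediant_iterate_le:
  fixes P N s l a :: real
  assumes "0 < l" "s / l < a"
  shows "\<exists>k>0. P + real k * s \<le> a * (N + real k * l)"
proof -
  have d: "0 < a * l - s" using assms by (simp add: pos_divide_less_eq)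
  obtain n :: nat where "(P - a * N) / (a * l - s) < real n" using reals_Archimedean2 by blast
  then have "P - a * N < real n * (a * l - s)" using d by (simp add: pos_divide_less_eq)
  also have "\<dots> \<le> real (Suc n) * (a * l - s)" using d by (intro mult_right_mono) auto
  finally have "P + real (Suc n) * s \<le> a * (N + real (Suc n) * l)"
    by (simp add: algebra_simps)
  then show ?thesis by (intro exI[of _ "Suc n"]) simp
qed

lemma mediant_iterate_ge:
  fixes P N s l b :: real
  assumes "0 < l" "b < s / l"
  shows "\<exists>k>0. b * (N + real k * l) \<le> P + real k * s"
proof -
  have "- s / l < - b" using assms(2) by simp
  then obtain k where "0 < k" "- P + real k * - s \<le> - b * (N + real k * l)"
    using mediant_iterate_le[OF assms(1)] by blast
  moreover from this(2) have "b * (N + real k * l) \<le> P + real k * s" by linarith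
  ultimately show ?thesis by blast
qed

lemma frequently_sequentially_Suc:
  "(\<exists>\<^sub>F n in sequentially. P (Suc n)) \<longleftrightarrow> (\<exists>\<^sub>F n in sequentially. P n)"
  unfolding frequently_def using eventually_sequentially_Suc[of "\<lambda>n. \<not> P n"] by simp

lemma frequently_switch:
  assumes "\<exists>\<^sub>F n in sequentially. P n" "\<exists>\<^sub>F n in sequentially. \<not> P n"
  shows "\<exists>\<^sub>F n in sequentially. P n \<and> \<not> P (Suc n)"
  unfolding frequently_sequentially
proof
  fix N
  obtain n1 where "N \<le> n1" "P n1" using assms(1) unfolding frequently_sequentially by blast
  obtain n2 where "n1 \<le> n2" "\<not> P n2" using assms(2) unfolding frequently_sequentially by blast
  then have "\<exists>n\<ge>n1. P n \<and> \<not> P (Suc n)"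
  proof (induction n2 rule: dec_induct)
    case base
    then show ?case using \<open>P n1\<close> by simp
  next
    case (step m)
    then show ?case by (cases "P m") auto
  qed
  with \<open>N \<le> n1\<close> show "\<exists>n\<ge>N. P n \<and> \<not> P (Suc n)" by (meson order.trans)
qed

lemma greedy_choice_exists:
  fixes s l :: "bool \<Rightarrow> real" and S L a b :: real
  defines "ratio choice n \<equiv> (S + (\<Sum>m<n. s (choice m))) / (L + (\<Sum>m<n. l (choice m)))"
  shows "\<exists>choice. \<forall>n. choice (Suc n) =
    (if choice n then a < ratio choice (Suc n) else b \<le> ratio choice (Suc n))"
proof -
  define step :: "real \<times> real \<times> bool \<Rightarrow> real \<times> real \<times> bool" where
    "step = (\<lambda>(P, N, x). (P + s x, N + l x,
       if x then a < (P + s x) / (N + l x) else b \<le> (P + s x) / (N + l x)))"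
  define st where "st n = (step ^^ n) (S, L, True)" for n
  define choice where "choice n = snd (snd (st n))" for n
  have st_Suc: "st (Suc n) = step (st n)" for n by (simp add: st_def)
  have st: "st n = (S + (\<Sum>m<n. s (choice m)), L + (\<Sum>m<n. l (choice m)), choice n)" for n
  proof (induction n)
    case 0
    then show ?case by (simp add: st_def choice_def)
  next
    case (Suc n)
    have "fst (st (Suc n)) = S + (\<Sum>m<Suc n. s (choice m))"
      "fst (snd (st (Suc n))) = L + (\<Sum>m<Suc n. l (choice m))"
      using Suc by (simp_all add: st_Suc step_def)
    then show ?case unfolding choice_def[of "Suc n"] by (metis prod.collapse)
  qed
  have "choice (Suc n) = (if choice n then a < ratio choice (Suc n) else b \<le> ratio choice (Suc n))" for n
  proof -
    have "choice (Suc n) = snd (snd (step (fst (st n), fst (snd (st n)), choice n)))"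
      unfolding choice_def[of "Suc n"] st_Suc st[of n] by simp
    then show ?thesis by (simp add: st step_def ratio_def add.assoc)
  qed
  then show ?thesis by blast
qed

text \<open>Greedy alternation: repeat the low-average move while the running ratio exceeds \<open>a\<close>,
  and the high-average move while it is below \<open>b\<close>; neither phase can last forever.\<close>
lemma oscillating_choice:
  fixes s l :: "bool \<Rightarrow> real" and S L a b :: real
  assumes "0 < l True" "0 < l False" "0 < L" "s True / l True < a" "b < s False / l False"
  defines "ratio choice n \<equiv> (S + (\<Sum>m<n. s (choice m))) / (L + (\<Sum>m<n. l (choice m)))"
  shows "\<exists>choice. (\<exists>\<^sub>F n in sequentially. ratio choice n \<le> a) \<and> (\<exists>\<^sub>F n in sequentially. b \<le> ratio choice n)"
proof -
  obtain choice where choice_Suc: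
    "\<And>n. choice (Suc n) = (if choice n then a < ratio choice (Suc n) else b \<le> ratio choice (Suc n))"
    using greedy_choice_exists[where S=S and s=s and L=L and l=l and a=a and b=b] unfolding ratio_def by blast
  define P where "P n = S + (\<Sum>m<n. s (choice m))" for n
  define N where "N n = L + (\<Sum>m<n. l (choice m))" for n
  have ratio_PN: "ratio choice n = P n / N n" for n by (simp add: ratio_def P_def N_def)
  have N_pos: "0 < N n" for n
  proof -
    have "0 < l x" for x using assms(1,2) by (cases x) simp_all
    then show ?thesis unfolding N_def using assms(3) by (intro add_pos_nonneg sum_nonneg) (simp_all add: less_imp_le)
  qed
  have constant_run: "P (n0 + k) = P n0 + real k * s x \<and> N (n0 + k) = N n0 + real k * l x"
    if "\<forall>n\<ge>n0. choice n = x" for n0 k x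
    using that by (induction k) (simp_all add: P_def N_def algebra_simps)
  have "\<not> (\<forall>n\<ge>n0. choice n = True)" for n0
  proof
    assume low: "\<forall>n\<ge>n0. choice n = True"
    obtain k where "0 < k" "P n0 + real k * s True \<le> a * (N n0 + real k * l True)"
      using mediant_iterate_le[OF assms(1,4)] by blast
    then have "ratio choice (n0 + k) \<le> a"
      using constant_run[OF low] N_pos[of "n0 + k"] by (simp add: ratio_PN pos_divide_le_eq)
    then show False using choice_Suc[of "n0 + k - 1"] low \<open>0 < k\<close> by simp
  qed
  then have freq_high: "\<exists>\<^sub>F n in sequentially. \<not> choice n" by (simp add: frequently_sequentially)
  have "\<not> (\<forall>n\<ge>n0. choice n = False)" for n0
  proof
    assume high: "\<forall>n\<ge>n0. choice n = False"
    obtain k where "0 < k" "b * (N n0 + real k * l False) \<le> P n0 + real k * s False"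
      using mediant_iterate_ge[OF assms(2,5)] by blast
    then have "b \<le> ratio choice (n0 + k)"
      using constant_run[OF high] N_pos[of "n0 + k"] by (simp add: ratio_PN pos_le_divide_eq)
    then show False using choice_Suc[of "n0 + k - 1"] high \<open>0 < k\<close> by simp
  qed
  then have freq_low: "\<exists>\<^sub>F n in sequentially. choice n" by (simp add: frequently_sequentially)
  have "\<exists>\<^sub>F n in sequentially. ratio choice (Suc n) \<le> a"
    using frequently_switch[OF freq_low freq_high] by (rule frequently_elim1) (auto simp: choice_Suc not_less)
  moreover have "\<exists>\<^sub>F n in sequentially. b \<le> ratio choice (Suc n)"
  proof -
    have "\<exists>\<^sub>F n in sequentially. \<not> choice n \<and> choice (Suc n)"
      using frequently_switch[of "\<lambda>n. \<not> choice n"] freq_low freq_high by simp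
    then show ?thesis by (rule frequently_elim1) (auto simp: choice_Suc)
  qed
  ultimately show ?thesis
    using frequently_sequentially_Suc[of "\<lambda>n. ratio choice n \<le> a"]
      frequently_sequentially_Suc[of "\<lambda>n. b \<le> ratio choice n"] by blast
qed

lemma Liminf_le_if_frequently:
  fixes X :: "nat \<Rightarrow> 'a::complete_linorder"
  assumes "\<exists>\<^sub>F n in sequentially. X n \<le> a"
  shows "liminf X \<le> a"
proof (rule ccontr)
  assume "\<not> liminf X \<le> a"
  then have "\<forall>\<^sub>F n in sequentially. a < X n"
    using le_Liminf_iff[of "liminf X" sequentially X] by (simp add: not_le)
  then show False using assms by (simp add: frequently_def not_le)
qed

lemma Limsup_ge_if_frequently:
  fixes X :: "nat \<Rightarrow> 'a::complete_linorder"
  assumes "\<exists>\<^sub>F n in sequentially. a \<le> X n"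
  shows "a \<le> limsup X"
proof (rule ccontr)
  assume "\<not> a \<le> limsup X"
  then have "\<forall>\<^sub>F n in sequentially. X n < a"
    using Limsup_le_iff[of sequentially X "limsup X"] by (simp add: not_le)
  then show False using assms by (simp add: frequently_def not_le)
qed

lemma frequently_sequentially_reindex:
  assumes "\<exists>\<^sub>F n in sequentially. P (T n)" "\<And>n. n \<le> T n"
  shows "\<exists>\<^sub>F n in sequentially. P n"
  using assms unfolding frequently_sequentially by (meson order.trans)

lemma limit_average_exists_if_tendsto:
  assumes "(\<lambda>n. prefix_sum M n / real n) \<longlonglongrightarrow> a"
  shows "limit_average_exists M"
proof -
  have lim: "(\<lambda>n. ereal (prefix_sum M n / real n)) \<longlonglongrightarrow> ereal a" using assms by simp
  show ?thesis
    unfolding limit_average_exists_def using lim_imp_Liminf[OF _ lim] lim_imp_Limsup[OF _ lim] by simp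
qed

lemma pump_without_limit_average:
  assumes lim: "(\<lambda>n. prefix_sum w n / real n) \<longlonglongrightarrow> \<alpha>" and "\<alpha> \<notin> \<rat>"
    and p: "strict_mono p" "0 < p 0"
  shows "\<exists>\<sigma>. \<not> limit_average_exists (pump w p \<sigma>)"
proof -
  define avg where "avg j = factor_sum w p j / factor_len p j" for j
  obtain kx ky where "avg kx < avg ky"
    using factor_averages_not_constant[OF assms] unfolding avg_def[symmetric]
    by (metis linorder_neqE_linordered_idom)
  let ?s = "\<lambda>x. factor_sum w p (if x then kx else ky)"
  let ?l = "\<lambda>x. factor_len p (if x then kx else ky)"
  define a where "a = avg kx + (avg ky - avg kx) / 3"
  define b where "b = avg ky - (avg ky - avg kx) / 3"
  have "avg kx < a" "a < b" "b < avg ky" using \<open>avg kx < avg ky\<close> by (simp_all add: a_def b_def field_simps)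
  moreover have "0 < real (p 0)" using p(2) by simp
  ultimately obtain choice where
    below: "\<exists>\<^sub>F n in sequentially. (prefix_sum w (p 0) + (\<Sum>m<n. ?s (choice m)))
        / (real (p 0) + (\<Sum>m<n. ?l (choice m))) \<le> a" and
    above: "\<exists>\<^sub>F n in sequentially. b \<le> (prefix_sum w (p 0) + (\<Sum>m<n. ?s (choice m)))
        / (real (p 0) + (\<Sum>m<n. ?l (choice m)))"
    using oscillating_choice[where l="?l" and L="real (p 0)" and s="?s" and a=a and b=b and S="prefix_sum w (p 0)"] factor_len_pos[OF p(1)]
    unfolding avg_def by auto
  define \<sigma> where "\<sigma> m = (if choice m then kx else ky)" for m
  define T where "T n = (\<Sum>m<Suc n. block_end p \<sigma> m - block_start p \<sigma> m)" for n
  define X where "X n = ereal (prefix_sum (pump w p \<sigma>) n / real n)" for n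
  have X_T: "X (T n) = ereal ((prefix_sum w (p 0) + (\<Sum>m<n. ?s (choice m)))
        / (real (p 0) + (\<Sum>m<n. ?l (choice m))))" for n
    unfolding X_def T_def average_pump_at_block_end[OF p] \<sigma>_def ..
  have "Suc n \<le> T n" for n
    unfolding T_def using block_start_less_end[OF p]
    by (intro lessThan_le_sum_pos[where L="\<lambda>m. block_end p \<sigma> m - block_start p \<sigma> m"]) simp
  then have T_ge: "n \<le> T n" for n using Suc_leD by blast
  have "\<exists>\<^sub>F n in sequentially. X (T n) \<le> ereal a"
    using below unfolding X_T ereal_less_eq(3) .
  then have "\<exists>\<^sub>F n in sequentially. X n \<le> ereal a" by (rule frequently_sequentially_reindex) (rule T_ge)
  then have "liminf X \<le> ereal a" by (rule Liminf_le_if_frequently)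
  moreover have "\<exists>\<^sub>F n in sequentially. ereal b \<le> X (T n)"
    using above unfolding X_T ereal_less_eq(3) .
  then have "\<exists>\<^sub>F n in sequentially. ereal b \<le> X n" by (rule frequently_sequentially_reindex) (rule T_ge)
  then have "ereal b \<le> limsup X" by (rule Limsup_ge_if_frequently)
  ultimately have "liminf X \<noteq> limsup X" using \<open>a < b\<close> by (metis ereal_less_eq(3) leD order.trans)
  then show ?thesis unfolding limit_average_exists_def X_def by blast
qed

section \<open>A word with irrational limit-average\<close>

definition sturmian :: "real \<Rightarrow> nat \<Rightarrow> nat" where
  "sturmian \<alpha> n = nat (\<lfloor>real (Suc n) * \<alpha>\<rfloor> - \<lfloor>real n * \<alpha>\<rfloor>)"

lemma floor_mult_Suc_bounds:
  assumes "0 \<le> \<alpha>" "\<alpha> \<le> 1"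
  shows "\<lfloor>real n * \<alpha>\<rfloor> \<le> \<lfloor>real (Suc n) * \<alpha>\<rfloor> \<and> \<lfloor>real (Suc n) * \<alpha>\<rfloor> \<le> \<lfloor>real n * \<alpha>\<rfloor> + 1"
proof -
  have "real n * \<alpha> \<le> real (Suc n) * \<alpha>" "real (Suc n) * \<alpha> \<le> real n * \<alpha> + 1"
    using assms by (simp_all add: mult_right_mono algebra_simps)
  then have "\<lfloor>real n * \<alpha>\<rfloor> \<le> \<lfloor>real (Suc n) * \<alpha>\<rfloor>" "\<lfloor>real (Suc n) * \<alpha>\<rfloor> \<le> \<lfloor>real n * \<alpha> + 1\<rfloor>"
    by (simp_all only: floor_mono)
  then show ?thesis by simp
qed

lemma prefix_sum_sturmian:
  assumes "0 \<le> \<alpha>" "\<alpha> \<le> 1"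
  shows "prefix_sum (sturmian \<alpha>) n = of_int \<lfloor>real n * \<alpha>\<rfloor>"
proof -
  have "prefix_sum (sturmian \<alpha>) n = (\<Sum>j<n. of_int \<lfloor>real (Suc j) * \<alpha>\<rfloor> - of_int \<lfloor>real j * \<alpha>\<rfloor>)"
    unfolding prefix_sum_def sturmian_def using floor_mult_Suc_bounds[OF assms] by (intro sum.cong) auto
  also have "\<dots> = of_int \<lfloor>real n * \<alpha>\<rfloor>" by (subst sum_lessThan_telescope) simp
  finally show ?thesis .
qed

lemma sturmian_average:
  assumes "0 \<le> \<alpha>" "\<alpha> \<le> 1"
  shows "(\<lambda>n. prefix_sum (sturmian \<alpha>) n / real n) \<longlonglongrightarrow> \<alpha>"
proof (rule tendsto_sandwich[of "\<lambda>n. \<alpha> - 1 / real n" _ _ "\<lambda>n. \<alpha>"])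
  have "\<alpha> - 1 / real n \<le> prefix_sum (sturmian \<alpha>) n / real n \<and> prefix_sum (sturmian \<alpha>) n / real n \<le> \<alpha>"
    if "0 < n" for n
  proof
    have "(real n * \<alpha> - 1) / real n \<le> of_int \<lfloor>real n * \<alpha>\<rfloor> / real n"
      by (rule divide_right_mono) linarith+
    moreover have "\<alpha> - 1 / real n = (real n * \<alpha> - 1) / real n" using that by (simp add: field_simps)
    ultimately show "\<alpha> - 1 / real n \<le> prefix_sum (sturmian \<alpha>) n / real n"
      by (simp add: prefix_sum_sturmian[OF assms])
    show "prefix_sum (sturmian \<alpha>) n / real n \<le> \<alpha>"
      using that of_int_floor_le[of "real n * \<alpha>"] by (simp add: prefix_sum_sturmian[OF assms] pos_divide_le_eq mult.commute)
  qed
  then show "\<forall>\<^sub>F n in sequentially. \<alpha> - 1 / real n \<le> prefix_sum (sturmian \<alpha>) n / real n"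
    "\<forall>\<^sub>F n in sequentially. prefix_sum (sturmian \<alpha>) n / real n \<le> \<alpha>"
    by (auto simp: eventually_sequentially intro: exI[of _ 1])
  show "(\<lambda>n. \<alpha> - 1 / real n) \<longlonglongrightarrow> \<alpha>"
    using tendsto_diff[OF tendsto_const lim_inverse_n', of \<alpha>] by simp
qed simp

lemma sqrt_2_irrational: "sqrt 2 \<notin> \<rat>"
proof
  assume "sqrt 2 \<in> \<rat>"
  then obtain m n :: nat where "n \<noteq> 0" "\<bar>sqrt 2\<bar> = real m / real n" "coprime m n"
    by (rule Rats_abs_nat_div_natE)
  then have "real m = sqrt 2 * real n" by (simp add: field_simps)
  then have "real (m\<^sup>2) = 2 * real (n\<^sup>2)" by (simp add: power_mult_distrib)
  then have eq: "m\<^sup>2 = 2 * n\<^sup>2" by linarith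
  then have "even m" by (metis dvd_triv_left even_power)
  then obtain k where "m = 2 * k" by blast
  with eq have "n\<^sup>2 = 2 * k\<^sup>2" by simp
  then have "even n" by (metis dvd_triv_left even_power)
  with \<open>even m\<close> \<open>coprime m n\<close> show False by fastforce
qed

lemma sturmian_in_L_LA:
  assumes "0 < mu" "0 \<le> \<alpha>" "\<alpha> \<le> 1"
  shows "sturmian \<alpha> \<in> L_LA mu"
proof -
  have "sturmian \<alpha> n \<le> mu" for n
    using floor_mult_Suc_bounds[OF assms(2,3), of n] assms(1) unfolding sturmian_def by linarith
  then show ?thesis
    unfolding L_LA_def omega_words_def using limit_average_exists_if_tendsto[OF sturmian_average[OF assms(2,3)]]
    by auto
qed


section \<open>Buechi automata as pushdown automata\<close>

definition buchi_to_bpda :: "(nat \<times> nat \<times> nat) set \<Rightarrow> pda_trans set" where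
  "buchi_to_bpda delta = (\<lambda>(p, a, p'). (p, Some a, 0, p', [0])) ` delta"

lemma bpda_step_buchi_to_bpda:
  "bpda_step (buchi_to_bpda delta) w (p, [0]) k c' k' \<longleftrightarrow>
     (\<exists>p'. c' = (p', [0]) \<and> k' = Suc k \<and> (p, w k, p') \<in> delta)"
  unfolding bpda_step_def buchi_to_bpda_def by force

lemma buchi_accepts_iff_bpda_accepts:
  "buchi_accepts delta q0 F w \<longleftrightarrow> bpda_accepts (buchi_to_bpda delta) q0 0 F w"
proof
  assume "buchi_accepts delta q0 F w"
  then obtain r where "r 0 = q0" "\<And>i. (r i, w i, r (Suc i)) \<in> delta" "\<exists>\<^sub>\<infinity>i. r i \<in> F"
    unfolding buchi_accepts_def by blast
  then show "bpda_accepts (buchi_to_bpda delta) q0 0 F w"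
    unfolding bpda_accepts_def
    by (intro exI[of _ "\<lambda>i. (r i, [0])"] exI[of _ "\<lambda>i. i"]) (auto simp: bpda_step_buchi_to_bpda)
next
  assume "bpda_accepts (buchi_to_bpda delta) q0 0 F w"
  then obtain c pos where c0: "c 0 = (q0, [0])" "pos 0 = 0"
    and steps: "\<And>i. bpda_step (buchi_to_bpda delta) w (c i) (pos i) (c (Suc i)) (pos (Suc i))"
    and acc: "\<exists>\<^sub>\<infinity>i. fst (c i) \<in> F"
    unfolding bpda_accepts_def by blast
  have run: "c i = (fst (c i), [0]) \<and> pos i = i" for i
  proof (induction i)
    case (Suc i)
    then show ?case using steps[of i] by (metis bpda_step_buchi_to_bpda fst_conv)
  qed (simp add: c0)
  have "(fst (c i), w i, fst (c (Suc i))) \<in> delta" for i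
    using steps[of i] run[of i] by (metis bpda_step_buchi_to_bpda fst_conv)
  then show "buchi_accepts delta q0 F w"
    unfolding buchi_accepts_def using c0 acc by (intro exI[of _ "\<lambda>i. fst (c i)"]) auto
qed

lemma omega_regular_imp_omega_context_free:
  assumes "omega_regular Sig L" and "finite Sig"
  shows "omega_context_free Sig L"
proof -
  obtain Q delta q0 F where L: "L \<subseteq> omega_words Sig" and "finite Q" and delta: "delta \<subseteq> Q \<times> Sig \<times> Q"
    and "q0 \<in> Q" "F \<subseteq> Q" and L_eq: "L = {w \<in> omega_words Sig. buchi_accepts delta q0 F w}"
    using assms(1) unfolding omega_regular_def by blast
  have "finite delta" using finite_subset[OF delta] \<open>finite Q\<close> assms(2) by blast
  then have "finite (buchi_to_bpda delta)" by (simp add: buchi_to_bpda_def)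
  moreover have "buchi_to_bpda delta \<subseteq> {(p, a, Z, p', gam). p \<in> Q \<and> (a = None \<or> the a \<in> Sig) \<and>
      Z \<in> {0} \<and> p' \<in> Q \<and> set gam \<subseteq> {0}}"
    using delta unfolding buchi_to_bpda_def by auto
  moreover have "L = {w \<in> omega_words Sig. bpda_accepts (buchi_to_bpda delta) q0 0 F w}"
    unfolding L_eq buchi_accepts_iff_bpda_accepts ..
  ultimately show ?thesis
    unfolding omega_context_free_def using L \<open>finite Q\<close> \<open>q0 \<in> Q\<close> \<open>F \<subseteq> Q\<close>
    by (intro conjI exI[of _ Q] exI[of _ "{0::nat}"] exI[of _ "buchi_to_bpda delta"] exI[of _ q0]
        exI[of _ "0::nat"] exI[of _ F]) auto
qed

lemma L_LA_not_omega_context_free: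
  assumes "0 < mu"
  shows "\<not> omega_context_free {0..mu} (L_LA mu)"
proof
  assume "omega_context_free {0..mu} (L_LA mu)"
  then obtain delta q0 Z0 F where "finite delta"
    and L_eq: "L_LA mu = {w \<in> omega_words {0..mu}. bpda_accepts delta q0 Z0 F w}"
    unfolding omega_context_free_def by blast
  define w where "w = sturmian (sqrt 2 - 1)"
  have "1 \<le> sqrt 2" "sqrt 2 \<le> 2" by (simp_all add: real_le_rsqrt real_le_lsqrt)
  moreover have "sqrt 2 - 1 \<notin> \<rat>"
  proof
    assume "sqrt 2 - 1 \<in> \<rat>"
    then have "sqrt 2 - 1 + 1 \<in> \<rat>" by (intro Rats_add) simp_all
    then show False using sqrt_2_irrational by simp
  qed
  ultimately have \<alpha>: "0 \<le> sqrt 2 - 1" "sqrt 2 - 1 \<le> 1" "sqrt 2 - 1 \<notin> \<rat>" by simp_all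
  have "w \<in> L_LA mu" unfolding w_def by (rule sturmian_in_L_LA[OF assms \<alpha>(1,2)])
  then have "w \<in> omega_words {0..mu}" "bpda_accepts delta q0 Z0 F w" using L_eq by blast+
  obtain p where p: "strict_mono p" "0 < p 0" and pumped: "\<And>\<sigma>. bpda_accepts delta q0 Z0 F (pump w p \<sigma>)"
    using bpda_pumping[OF \<open>finite delta\<close> \<open>bpda_accepts delta q0 Z0 F w\<close>] by blast
  obtain \<sigma> where "\<not> limit_average_exists (pump w p \<sigma>)"
    using pump_without_limit_average[OF sturmian_average[OF \<alpha>(1,2)] \<alpha>(3) p] unfolding w_def by blast
  moreover have "pump w p \<sigma> \<in> L_LA mu"
    using L_eq pumped pump_in_omega_words[OF p \<open>w \<in> omega_words {0..mu}\<close>] by blast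
  ultimately show False unfolding L_LA_def by blast
qed

theorem theorem15:
  fixes mu :: nat
  assumes "mu > 0"
  shows "\<not> omega_regular {0..mu} (L_LA mu) \<and> \<not> omega_context_free {0..mu} (L_LA mu)"
  using L_LA_not_omega_context_free[OF assms] omega_regular_imp_omega_context_free[of "{0..mu}"] by auto

end
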